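(* Let $N\ge2$ and let $H\in M_{(N-1)\times N}(\mathbb T)$ be partial Hadamard, with rows $R_1,\ldots,R_{N-1}\in\mathbb T^N$ and columns $C_1,\ldots,C_N\in\mathbb T^{N-1}$. Let $Z\in\mathbb C^N$ be a nonzero vector with $\mathrm{span}(R_1,\ldots,R_{N-1})^\perp=\mathbb CZ$. The following are equivalent: (1) the submagic matrix $(P_{ij})_{i,j=1}^{N-1}$, $P_{ij}=\mathrm{Proj}(R_i/R_j)\in M_N(\mathbb C)$, can be completed to an $N\times N$ magic matrix with entries in $M_N(\mathbb C)$; (2) with $G\in M_N(\mathbb C)$, $G_{kl}=\frac1N|\langle C_k,C_l\rangle|^2$, the matrix $G-(N-2)1_N$ is a projection; (3) $HDH^*=c\,1_{N-1}$ for some scalar $c$, where $D=\mathrm{diag}(|Z_1|^2,\ldots,|Z_N|^2)$.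
   Context: $\mathbb T$ is the unit circle; a partial Hadamard matrix has entries in $\mathbb T$ and pairwise orthogonal rows. $R_i/R_j$ is entrywise division; $\mathrm{Proj}(\xi)$ is the orthogonal projection onto $\mathbb C\xi$; $\langle x,y\rangle=\sum_l x_l\overline{y_l}$. A submagic matrix is a square matrix of orthogonal projections, pairwise orthogonal within each row and each column; it is magic if moreover each row and each column sums to $1$; a completion is a magic matrix whose upper-left $(N-1)\times(N-1)$ block is the given one. *)

theory Defs
  imports "Jordan_Normal_Form.Schur_Decomposition"
begin

text \<open>Matrices are Jordan_Normal_Form matrices over complex. Inner product
  (u \<bullet>c v) = sum_l u_l * cnj v_l. Indices start at 0.\<close>

definition partial_hadamard :: "nat \<Rightarrow> nat \<Rightarrow> complex mat \<Rightarrow> bool" where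
  "partial_hadamard m n H \<longleftrightarrow> H \<in> carrier_mat m n \<and>
     (\<forall>i<m. \<forall>j<n. cmod (H $$ (i,j)) = 1) \<and>
     (\<forall>i<m. \<forall>k<m. i \<noteq> k \<longrightarrow> row H i \<bullet>c row H k = 0)"

definition is_projection :: "nat \<Rightarrow> complex mat \<Rightarrow> bool" where
  "is_projection d P \<longleftrightarrow> P \<in> carrier_mat d d \<and> P * P = P \<and> mat_adjoint P = P"

definition Proj :: "complex vec \<Rightarrow> complex mat" where
  "Proj xi = mat (dim_vec xi) (dim_vec xi) (\<lambda>(a,b). xi $ a * cnj (xi $ b) / (xi \<bullet>c xi))"

definition vec_div :: "complex vec \<Rightarrow> complex vec \<Rightarrow> complex vec" where
  "vec_div u v = vec (dim_vec u) (\<lambda>l. u $ l / v $ l)"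

definition mat_sum :: "nat \<Rightarrow> ('i \<Rightarrow> complex mat) \<Rightarrow> 'i set \<Rightarrow> complex mat" where
  "mat_sum d F I = mat d d (\<lambda>ab. \<Sum>i\<in>I. F i $$ ab)"

definition submagic :: "nat \<Rightarrow> nat \<Rightarrow> (nat \<Rightarrow> nat \<Rightarrow> complex mat) \<Rightarrow> bool" where
  "submagic m d Q \<longleftrightarrow>
     (\<forall>i<m. \<forall>j<m. is_projection d (Q i j)) \<and>
     (\<forall>i<m. \<forall>j<m. \<forall>k<m. j \<noteq> k \<longrightarrow> Q i j * Q i k = 0\<^sub>m d d) \<and>
     (\<forall>j<m. \<forall>i<m. \<forall>k<m. i \<noteq> k \<longrightarrow> Q i j * Q k j = 0\<^sub>m d d)"

definition magic :: "nat \<Rightarrow> nat \<Rightarrow> (nat \<Rightarrow> nat \<Rightarrow> complex mat) \<Rightarrow> bool" where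
  "magic m d Q \<longleftrightarrow> submagic m d Q \<and>
     (\<forall>i<m. mat_sum d (\<lambda>j. Q i j) {..<m} = 1\<^sub>m d) \<and>
     (\<forall>j<m. mat_sum d (\<lambda>i. Q i j) {..<m} = 1\<^sub>m d)"

definition has_magic_completion :: "nat \<Rightarrow> nat \<Rightarrow> (nat \<Rightarrow> nat \<Rightarrow> complex mat) \<Rightarrow> bool" where
  "has_magic_completion m d P \<longleftrightarrow>
     (\<exists>Q. magic m d Q \<and> (\<forall>i<m-1. \<forall>j<m-1. Q i j = P i j))"

end

theory Submission
  imports Defs
begin

text \<open>An (N-1) \<times> N partial Hadamard matrix H always completes to a complex Hadamard matrix M:
  append the multiple W of Z with \<open>\<langle>W,W\<rangle> = N\<close>. The rows of M are then pairwise orthogonal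
  of norm \<open>\<surd>N\<close>, so \<open>M M\<^sup>* = N\<close>, hence \<open>M\<^sup>* M = N\<close>; comparing diagonal entries with the squared
  column norms \<open>N - 1\<close> of H gives \<open>|W\<^sub>a| = 1\<close>. Consequently all three conditions hold:
  the matrix \<open>Proj(R\<^sub>i/R\<^sub>j)\<close> built from a Hadamard matrix is magic; for \<open>k \<noteq> l\<close>,
  \<open>|\<langle>C\<^sub>k,C\<^sub>l\<rangle>| = |W\<^sub>k W\<^sub>l| = 1\<close>, so \<open>G - (N-2)\<close> is the projection onto the constant
  vectors; and \<open>|Z\<^sub>a|\<close> is constant, so D is scalar.\<close>

lemma mat_adjoint_carrier[simp]:
  "A \<in> carrier_mat m n \<Longrightarrow> mat_adjoint A \<in> carrier_mat n m"
  unfolding mat_adjoint_def by (auto simp: mat_of_rows_def cols_def)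

lemma dim_mat_adjoint[simp]:
  "dim_row (mat_adjoint A) = dim_col A" "dim_col (mat_adjoint A) = dim_row A"
  unfolding mat_adjoint_def by (auto simp: mat_of_rows_def cols_def)

lemma index_mat_adjoint[simp]:
  "A \<in> carrier_mat m n \<Longrightarrow> i < n \<Longrightarrow> j < m \<Longrightarrow> mat_adjoint A $$ (i,j) = cnj (A $$ (j,i))"
  unfolding mat_adjoint_def by (auto simp: mat_of_rows_def cols_def)

lemma index_mult_mat_adjoint:
  assumes "(A :: complex mat) \<in> carrier_mat m n" "i < m" "j < m"
  shows "(A * mat_adjoint A) $$ (i,j) = row A i \<bullet>c row A j"
  using assms by (simp add: scalar_prod_def)

lemma index_mat_adjoint_mult:
  assumes "(A :: complex mat) \<in> carrier_mat m n" "a < n" "b < n"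
  shows "(mat_adjoint A * A) $$ (a,b) = col A b \<bullet>c col A a"
  using assms by (simp add: scalar_prod_def mult.commute)

lemma mat_adjoint_mult_eq_smult_one:
  assumes A: "(A :: complex mat) \<in> carrier_mat n n" and AA: "A * mat_adjoint A = c \<cdot>\<^sub>m 1\<^sub>m n"
    and c: "c \<noteq> 0"
  shows "mat_adjoint A * A = c \<cdot>\<^sub>m 1\<^sub>m n"
proof -
  have "(1 / c) \<cdot>\<^sub>m A * mat_adjoint A = (1 / c) \<cdot>\<^sub>m (c \<cdot>\<^sub>m 1\<^sub>m n)"
    unfolding AA[symmetric] by (rule mult_smult_assoc_mat[OF A mat_adjoint_carrier[OF A]])
  also have "\<dots> = 1\<^sub>m n"
    using c by (intro eq_matI) auto
  finally have "(1 / c) \<cdot>\<^sub>m A * mat_adjoint A = 1\<^sub>m n" .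
  then have "mat_adjoint A * ((1 / c) \<cdot>\<^sub>m A) = 1\<^sub>m n"
    using A by (intro mat_mult_left_right_inverse[OF _ mat_adjoint_carrier[OF A]]) simp_all
  then have "c \<cdot>\<^sub>m (mat_adjoint A * ((1 / c) \<cdot>\<^sub>m A)) = c \<cdot>\<^sub>m 1\<^sub>m n"
    by simp
  moreover have "c \<cdot>\<^sub>m (mat_adjoint A * ((1 / c) \<cdot>\<^sub>m A)) = mat_adjoint A * A"
    using A c by (intro eq_matI) (auto simp: scalar_prod_def sum_distrib_left)
  ultimately show ?thesis by simp
qed

lemma mult_mat_adjoint_eq_smult_one:
  assumes A: "(A :: complex mat) \<in> carrier_mat m n"
    and rows: "\<And>i k. i < m \<Longrightarrow> k < m \<Longrightarrow> row A i \<bullet>c row A k = (if i = k then c else 0)"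
  shows "A * mat_adjoint A = c \<cdot>\<^sub>m 1\<^sub>m m"
proof (rule eq_matI)
  fix i k assume "i < dim_row (c \<cdot>\<^sub>m 1\<^sub>m m)" "k < dim_col (c \<cdot>\<^sub>m 1\<^sub>m m)"
  then have i: "i < m" and k: "k < m" by simp_all
  have "(A * mat_adjoint A) $$ (i,k) = row A i \<bullet>c row A k"
    by (rule index_mult_mat_adjoint[OF A i k])
  then show "(A * mat_adjoint A) $$ (i,k) = (c \<cdot>\<^sub>m 1\<^sub>m m) $$ (i,k)"
    using i k by (simp add: rows)
qed (use A in simp_all)

lemma col_cscalar_of_orthogonal_rows:
  assumes A: "(A :: complex mat) \<in> carrier_mat n n"
    and rows: "\<And>i k. i < n \<Longrightarrow> k < n \<Longrightarrow> row A i \<bullet>c row A k = (if i = k then c else 0)"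
    and c: "c \<noteq> 0" and ab: "a < n" "b < n"
  shows "col A a \<bullet>c col A b = (if a = b then c else 0)"
proof -
  have "mat_adjoint A * A = c \<cdot>\<^sub>m 1\<^sub>m n"
    by (rule mat_adjoint_mult_eq_smult_one[OF A mult_mat_adjoint_eq_smult_one[OF A rows] c])
  then have "(mat_adjoint A * A) $$ (b,a) = (if a = b then c else 0)"
    using ab by auto
  then show ?thesis
    using index_mat_adjoint_mult[OF A ab(2,1)] by simp
qed

lemma norm_eq_1_iff_mult_cnj: "cmod z = 1 \<longleftrightarrow> z * cnj z = 1"
proof -
  have "cmod z = 1 \<longleftrightarrow> (cmod z)\<^sup>2 = 1"
    by (simp add: abs_square_eq_1)
  also have "\<dots> \<longleftrightarrow> complex_of_real ((cmod z)\<^sup>2) = 1"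
    by (simp only: of_real_eq_1_iff)
  finally show ?thesis
    by (simp only: complex_norm_square)
qed

lemma cscalar_self_eq_of_real: "v \<bullet>c v = complex_of_real (\<Sum>l<dim_vec v. (cmod (v $ l))\<^sup>2)"
  unfolding scalar_prod_def of_real_sum atLeast0LessThan
  by (intro sum.cong) (simp_all add: complex_norm_square del: of_real_power)

lemma Proj_carrier[simp]: "Proj \<xi> \<in> carrier_mat (dim_vec \<xi>) (dim_vec \<xi>)"
  by (simp add: Proj_def)

lemma dim_Proj[simp]: "dim_row (Proj \<xi>) = dim_vec \<xi>" "dim_col (Proj \<xi>) = dim_vec \<xi>"
  by (simp_all add: Proj_def)

lemma index_Proj:
  "a < dim_vec \<xi> \<Longrightarrow> b < dim_vec \<xi> \<Longrightarrow> Proj \<xi> $$ (a,b) = \<xi> $ a * cnj (\<xi> $ b) / (\<xi> \<bullet>c \<xi>)"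
  by (simp add: Proj_def)

lemma Proj_mult_Proj:
  assumes "dim_vec \<eta> = dim_vec \<xi>"
  shows "Proj \<xi> * Proj \<eta> = ((\<eta> \<bullet>c \<xi>) / ((\<xi> \<bullet>c \<xi>) * (\<eta> \<bullet>c \<eta>))) \<cdot>\<^sub>m
    mat (dim_vec \<xi>) (dim_vec \<xi>) (\<lambda>(a,b). \<xi> $ a * cnj (\<eta> $ b))"
    (is "_ = ?k \<cdot>\<^sub>m ?J")
proof (rule eq_matI)
  fix a b assume "a < dim_row (?k \<cdot>\<^sub>m ?J)" "b < dim_col (?k \<cdot>\<^sub>m ?J)"
  then have a: "a < dim_vec \<xi>" and b: "b < dim_vec \<xi>" by auto
  have "(Proj \<xi> * Proj \<eta>) $$ (a,b) =
      (\<Sum>c<dim_vec \<xi>. \<xi> $ a * cnj (\<xi> $ c) / (\<xi> \<bullet>c \<xi>) * (\<eta> $ c * cnj (\<eta> $ b) / (\<eta> \<bullet>c \<eta>)))"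
    using a b assms by (simp add: Proj_def scalar_prod_def atLeast0LessThan)
  also have "\<dots> = ?k * (\<xi> $ a * cnj (\<eta> $ b))"
    using assms by (simp add: scalar_prod_def atLeast0LessThan sum_distrib_left sum_divide_distrib ac_simps)
  finally show "(Proj \<xi> * Proj \<eta>) $$ (a,b) = (?k \<cdot>\<^sub>m ?J) $$ (a,b)"
    using a b by simp
qed (use assms in simp_all)

lemma Proj_mult_self: "Proj \<xi> * Proj \<xi> = Proj \<xi>"
proof -
  \<comment> \<open>the case \<open>\<xi> = 0\<close> is included: there both sides are 0, as \<open>x / 0 = 0\<close>\<close>
  have "(\<xi> \<bullet>c \<xi>) / ((\<xi> \<bullet>c \<xi>) * (\<xi> \<bullet>c \<xi>)) = 1 / (\<xi> \<bullet>c \<xi>)"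
    by (cases "\<xi> \<bullet>c \<xi> = 0") simp_all
  then show ?thesis
    by (simp add: Proj_mult_Proj) (auto simp: Proj_def intro!: eq_matI)
qed

lemma Proj_mult_orthogonal:
  "dim_vec \<eta> = dim_vec \<xi> \<Longrightarrow> \<eta> \<bullet>c \<xi> = 0 \<Longrightarrow> Proj \<xi> * Proj \<eta> = 0\<^sub>m (dim_vec \<xi>) (dim_vec \<xi>)"
  by (simp add: Proj_mult_Proj) (auto intro!: eq_matI)

lemma mat_adjoint_Proj: "mat_adjoint (Proj \<xi>) = Proj \<xi>"
proof -
  have "cnj (\<xi> \<bullet>c \<xi>) = \<xi> \<bullet>c \<xi>"
    by (simp add: cscalar_self_eq_of_real)
  then show ?thesis
    by (intro eq_matI) (simp_all add: index_mat_adjoint[OF Proj_carrier] index_Proj)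
qed

lemma is_projection_Proj: "is_projection (dim_vec \<xi>) (Proj \<xi>)"
  by (simp add: is_projection_def Proj_mult_self mat_adjoint_Proj)

definition unimodular_vec :: "complex vec \<Rightarrow> bool" where
  "unimodular_vec v \<longleftrightarrow> (\<forall>l<dim_vec v. cmod (v $ l) = 1)"

lemma cscalar_self_unimodular: "unimodular_vec v \<Longrightarrow> v \<bullet>c v = of_nat (dim_vec v)"
  unfolding cscalar_self_eq_of_real unimodular_vec_def by simp

lemma index_vec_div_unimodular:
  assumes "unimodular_vec v" "dim_vec v = dim_vec u" "l < dim_vec u"
  shows "vec_div u v $ l = u $ l * cnj (v $ l)"
proof -
  have "v $ l * cnj (v $ l) = 1"
    using assms by (simp add: unimodular_vec_def norm_eq_1_iff_mult_cnj)
  then show ?thesis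
    using assms(3) by (simp add: vec_div_def divide_inverse inverse_unique)
qed

lemma dim_vec_div[simp]: "dim_vec (vec_div u v) = dim_vec u"
  by (simp add: vec_div_def)

lemma cscalar_vec_div_same_denominator:
  assumes "dim_vec u = n" "dim_vec v = n" "dim_vec w = n" "unimodular_vec w"
  shows "vec_div u w \<bullet>c vec_div v w = u \<bullet>c v"
proof -
  have "vec_div u w $ l * cnj (vec_div v w $ l) = u $ l * cnj (v $ l)" if l: "l < n" for l
  proof -
    have "w $ l * cnj (w $ l) = 1"
      using assms l by (simp add: unimodular_vec_def norm_eq_1_iff_mult_cnj)
    moreover have "vec_div u w $ l * cnj (vec_div v w $ l) = (w $ l * cnj (w $ l)) * (u $ l * cnj (v $ l))"
      using assms l by (simp add: index_vec_div_unimodular)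
    ultimately show ?thesis by simp
  qed
  then show ?thesis
    using assms by (simp add: scalar_prod_def vec_div_def)
qed

lemma cscalar_vec_div_same_numerator:
  assumes "dim_vec u = n" "dim_vec v = n" "dim_vec w = n"
    and "unimodular_vec u" "unimodular_vec v" "unimodular_vec w"
  shows "vec_div u v \<bullet>c vec_div u w = w \<bullet>c v"
proof -
  have "vec_div u v $ l * cnj (vec_div u w $ l) = w $ l * cnj (v $ l)" if l: "l < n" for l
  proof -
    have "u $ l * cnj (u $ l) = 1"
      using assms l by (simp add: unimodular_vec_def norm_eq_1_iff_mult_cnj)
    moreover have "vec_div u v $ l * cnj (vec_div u w $ l) = (u $ l * cnj (u $ l)) * (w $ l * cnj (v $ l))"
      using assms l by (simp add: index_vec_div_unimodular)
    ultimately show ?thesis by simp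
  qed
  then show ?thesis
    using assms by (simp add: scalar_prod_def vec_div_def)
qed

lemma partial_hadamard_row_unimodular:
  "partial_hadamard m n H \<Longrightarrow> i < m \<Longrightarrow> unimodular_vec (row H i)"
  by (auto simp: partial_hadamard_def unimodular_vec_def)

lemma partial_hadamard_row_cscalar:
  assumes "partial_hadamard m n H" "i < m" "k < m"
  shows "row H i \<bullet>c row H k = (if i = k then of_nat n else 0)"
  using assms cscalar_self_unimodular[OF partial_hadamard_row_unimodular[OF assms(1,2)]]
  by (auto simp: partial_hadamard_def)

lemma partial_hadamard_mult_adjoint:
  assumes "partial_hadamard m n H"
  shows "H * mat_adjoint H = of_nat n \<cdot>\<^sub>m 1\<^sub>m m"
  using assms by (intro mult_mat_adjoint_eq_smult_one[of _ m n] partial_hadamard_row_cscalar)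
    (simp_all add: partial_hadamard_def)

lemma hadamard_col_cscalar:
  assumes "partial_hadamard n n M" "a < n" "b < n"
  shows "col M a \<bullet>c col M b = (if a = b then of_nat n else 0)"
  using assms by (intro col_cscalar_of_orthogonal_rows partial_hadamard_row_cscalar)
    (auto simp: partial_hadamard_def)

lemma index_Proj_vec_div_rows:
  assumes "partial_hadamard n n M" "i < n" "j < n" "a < n" "b < n"
  shows "Proj (vec_div (row M i) (row M j)) $$ (a,b) =
    M $$ (i,a) * cnj (M $$ (i,b)) * (cnj (M $$ (j,a)) * M $$ (j,b)) / of_nat n"
proof -
  have M: "M \<in> carrier_mat n n" using assms by (simp add: partial_hadamard_def)
  have "vec_div (row M i) (row M j) \<bullet>c vec_div (row M i) (row M j) = row M i \<bullet>c row M i"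
    using M assms by (intro cscalar_vec_div_same_denominator partial_hadamard_row_unimodular[OF assms(1)])
        simp_all
  also have "\<dots> = of_nat n"
    using partial_hadamard_row_cscalar[OF assms(1,2,2)] by simp
  finally show ?thesis
    using M assms partial_hadamard_row_unimodular[OF assms(1,3)]
    by (simp add: index_Proj index_vec_div_unimodular ac_simps)
qed

lemma hadamard_magic_Proj_vec_div:
  assumes H: "partial_hadamard n n M"
  shows "magic n n (\<lambda>i j. Proj (vec_div (row M i) (row M j)))"
proof -
  have M: "M \<in> carrier_mat n n" using H by (simp add: partial_hadamard_def)
  have unimodular: "unimodular_vec (row M i)" if "i < n" for i
    using partial_hadamard_row_unimodular[OF H that] .
  have unit: "M $$ (i,a) * cnj (M $$ (i,a)) = 1" if "i < n" "a < n" for i a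
    using H that by (simp add: partial_hadamard_def norm_eq_1_iff_mult_cnj)
  have cols_orthonormal: "(\<Sum>i<n. M $$ (i,a) * cnj (M $$ (i,b))) = (if a = b then of_nat n else 0)"
    if "a < n" "b < n" for a b
    using hadamard_col_cscalar[OF H that] M that by (simp add: scalar_prod_def atLeast0LessThan)
  have row_orth: "Proj (vec_div (row M i) (row M j)) * Proj (vec_div (row M i) (row M k)) = 0\<^sub>m n n"
    if "i < n" "j < n" "k < n" "j \<noteq> k" for i j k
  proof -
    have "vec_div (row M i) (row M k) \<bullet>c vec_div (row M i) (row M j) = row M j \<bullet>c row M k"
      using M that by (intro cscalar_vec_div_same_numerator unimodular) simp_all
    then show ?thesis
      using M that by (simp add: Proj_mult_orthogonal partial_hadamard_row_cscalar[OF H])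
  qed
  have col_orth: "Proj (vec_div (row M i) (row M j)) * Proj (vec_div (row M k) (row M j)) = 0\<^sub>m n n"
    if "i < n" "j < n" "k < n" "i \<noteq> k" for i j k
  proof -
    have "vec_div (row M k) (row M j) \<bullet>c vec_div (row M i) (row M j) = row M k \<bullet>c row M i"
      using M that by (intro cscalar_vec_div_same_denominator unimodular) simp_all
    then show ?thesis
      using M that by (simp add: Proj_mult_orthogonal partial_hadamard_row_cscalar[OF H])
  qed
  have row_sum: "mat_sum n (\<lambda>j. Proj (vec_div (row M i) (row M j))) {..<n} = 1\<^sub>m n"
    if i: "i < n" for i
  proof (rule eq_matI)
    fix a b assume "a < dim_row (1\<^sub>m n :: complex mat)" "b < dim_col (1\<^sub>m n :: complex mat)"
    then have a: "a < n" and b: "b < n" by simp_all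
    have "(\<Sum>j<n. Proj (vec_div (row M i) (row M j)) $$ (a,b)) =
        M $$ (i,a) * cnj (M $$ (i,b)) / of_nat n * (\<Sum>j<n. M $$ (j,b) * cnj (M $$ (j,a)))"
      using i a b by (simp add: index_Proj_vec_div_rows[OF H] sum_distrib_left ac_simps)
    also have "\<dots> = 1\<^sub>m n $$ (a,b)"
      using a b unit[OF i a] by (auto simp: cols_orthonormal)
    finally show "mat_sum n (\<lambda>j. Proj (vec_div (row M i) (row M j))) {..<n} $$ (a,b) = 1\<^sub>m n $$ (a,b)"
      using a b by (simp add: mat_sum_def)
  qed (simp_all add: mat_sum_def)
  have column_sum: "mat_sum n (\<lambda>i. Proj (vec_div (row M i) (row M j))) {..<n} = 1\<^sub>m n"
    if j: "j < n" for j
  proof (rule eq_matI)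
    fix a b assume "a < dim_row (1\<^sub>m n :: complex mat)" "b < dim_col (1\<^sub>m n :: complex mat)"
    then have a: "a < n" and b: "b < n" by simp_all
    have "(\<Sum>i<n. Proj (vec_div (row M i) (row M j)) $$ (a,b)) =
        cnj (M $$ (j,a)) * M $$ (j,b) / of_nat n * (\<Sum>i<n. M $$ (i,a) * cnj (M $$ (i,b)))"
      using j a b by (simp add: index_Proj_vec_div_rows[OF H] sum_distrib_left ac_simps)
    also have "\<dots> = 1\<^sub>m n $$ (a,b)"
      using a b unit[OF j a] by (auto simp: cols_orthonormal ac_simps)
    finally show "mat_sum n (\<lambda>i. Proj (vec_div (row M i) (row M j))) {..<n} $$ (a,b) = 1\<^sub>m n $$ (a,b)"
      using a b by (simp add: mat_sum_def)
  qed (simp_all add: mat_sum_def)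
  have "is_projection n (Proj (vec_div (row M i) (row M j)))" if "i < n" for i j
    using is_projection_Proj[of "vec_div (row M i) (row M j)"] M that by simp
  then show ?thesis
    unfolding magic_def submagic_def using row_orth col_orth row_sum column_sum by blast
qed

lemma cnj_cscalar: "dim_vec v = dim_vec w \<Longrightarrow> cnj (v \<bullet>c w) = w \<bullet>c v"
  by (simp add: scalar_prod_def cnj_sum mult.commute)

lemma partial_hadamard_col_unimodular:
  "partial_hadamard m n H \<Longrightarrow> j < n \<Longrightarrow> unimodular_vec (col H j)"
  by (auto simp: partial_hadamard_def unimodular_vec_def)

locale hadamard_row_completion =
  fixes n :: nat and H :: "complex mat" and W :: "complex vec"
  assumes H: "partial_hadamard n (Suc n) H"
    and W: "W \<in> carrier_vec (Suc n)"
    and W_orthogonal: "\<And>i. i < n \<Longrightarrow> W \<bullet>c row H i = 0"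
    and W_norm: "W \<bullet>c W = of_nat (Suc n)"
begin

definition completed :: "complex mat" where
  "completed = mat (Suc n) (Suc n) (\<lambda>(i,j). if i < n then H $$ (i,j) else W $ j)"

lemma H_carrier: "H \<in> carrier_mat n (Suc n)"
  using H by (simp add: partial_hadamard_def)

lemma completed_carrier: "completed \<in> carrier_mat (Suc n) (Suc n)"
  by (simp add: completed_def)

lemma row_completed: "i < Suc n \<Longrightarrow> row completed i = (if i < n then row H i else W)"
  using H_carrier W by (auto simp: completed_def intro!: eq_vecI)

lemma completed_row_cscalar:
  assumes "i < Suc n" "k < Suc n"
  shows "row completed i \<bullet>c row completed k = (if i = k then of_nat (Suc n) else 0)"
proof -
  have "row H i \<bullet>c W = 0" if "i < n" for i
    using cnj_cscalar[of W "row H i"] W_orthogonal[OF that] W H_carrier by simp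
  then show ?thesis
    using assms by (auto simp: row_completed W_norm W_orthogonal partial_hadamard_row_cscalar[OF H])
qed

lemma col_cscalar_completed:
  assumes "k < Suc n" "l < Suc n"
  shows "col completed k \<bullet>c col completed l = col H k \<bullet>c col H l + W $ k * cnj (W $ l)"
  using assms H_carrier by (simp add: completed_def scalar_prod_def atLeast0LessThan)

lemma col_cscalar_self: "k < Suc n \<Longrightarrow> col H k \<bullet>c col H k = of_nat n"
  using cscalar_self_unimodular[OF partial_hadamard_col_unimodular[OF H]] H_carrier by simp

lemma completed_col_cscalar:
  "k < Suc n \<Longrightarrow> l < Suc n \<Longrightarrow> col completed k \<bullet>c col completed l = (if k = l then of_nat (Suc n) else 0)"
  by (intro col_cscalar_of_orthogonal_rows[OF completed_carrier] completed_row_cscalar)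
    (simp_all del: of_nat_Suc)

lemma W_unimodular: "unimodular_vec W"
  unfolding unimodular_vec_def
proof (intro allI impI)
  fix a assume "a < dim_vec W"
  then have a: "a < Suc n" using W by simp
  \<comment> \<open>the diagonal entry of \<open>completed\<^sup>* * completed = (n+1) \<cdot> 1\<close>\<close>
  have "of_nat n + W $ a * cnj (W $ a) = of_nat (Suc n)"
    using completed_col_cscalar[OF a a] col_cscalar_completed[OF a a] col_cscalar_self[OF a] by simp
  then show "cmod (W $ a) = 1"
    by (simp add: norm_eq_1_iff_mult_cnj)
qed

lemma hadamard_completed: "partial_hadamard (Suc n) (Suc n) completed"
proof -
  have "cmod (completed $$ (i,j)) = 1" if "i < Suc n" "j < Suc n" for i j
    using that H W_unimodular W by (auto simp: completed_def partial_hadamard_def unimodular_vec_def)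
  then show ?thesis
    unfolding partial_hadamard_def using completed_carrier completed_row_cscalar by simp
qed

lemma has_magic_completion_Proj_vec_div:
  "has_magic_completion (Suc n) (Suc n) (\<lambda>i j. Proj (vec_div (row H i) (row H j)))"
  unfolding has_magic_completion_def
  using hadamard_magic_Proj_vec_div[OF hadamard_completed] row_completed by auto

lemma norm_col_cscalar:
  assumes "k < Suc n" "l < Suc n" "k \<noteq> l"
  shows "cmod (col H k \<bullet>c col H l) = 1"
proof -
  have "col H k \<bullet>c col H l = - (W $ k * cnj (W $ l))"
    using completed_col_cscalar[OF assms(1,2)] col_cscalar_completed[OF assms(1,2)] assms(3)
    by (simp add: eq_neg_iff_add_eq_0)
  then show ?thesis
    using W_unimodular W assms by (simp add: unimodular_vec_def norm_mult)
qed

lemma col_Gram_minus_smult_one: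
  assumes "1 \<le> n"
  shows "mat (Suc n) (Suc n) (\<lambda>(k,l). complex_of_real ((cmod (col H k \<bullet>c col H l))\<^sup>2 / real (Suc n)))
      - of_nat (n - 1) \<cdot>\<^sub>m 1\<^sub>m (Suc n) = mat (Suc n) (Suc n) (\<lambda>_. complex_of_real (1 / real (Suc n)))"
proof -
  have "1 + complex_of_nat n \<noteq> 0"
    by (metis of_nat_Suc of_nat_eq_0_iff nat.distinct(1))
  then have diagonal: "(complex_of_nat n)\<^sup>2 / (1 + of_nat n) - of_nat (n - Suc 0) = 1 / (1 + of_nat n)"
    using assms by (simp add: of_nat_diff field_simps power2_eq_square)
  show ?thesis
    by (rule eq_matI) (auto simp: col_cscalar_self norm_col_cscalar diagonal)
qed

lemma mult_diag_norm_mult_adjoint: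
  assumes Z: "Z \<in> carrier_vec (Suc n)" and WZ: "W = c \<cdot>\<^sub>v Z"
  shows "H * mat (Suc n) (Suc n) (\<lambda>(a,b). if a = b then complex_of_real ((cmod (Z $ a))\<^sup>2) else 0)
      * mat_adjoint H = (of_nat (Suc n) / complex_of_real ((cmod c)\<^sup>2)) \<cdot>\<^sub>m 1\<^sub>m n"
proof -
  let ?k = "complex_of_real (1 / (cmod c)\<^sup>2)"
  have "(cmod (Z $ a))\<^sup>2 = 1 / (cmod c)\<^sup>2" if a: "a < Suc n" for a
  proof -
    have "cmod c * cmod (Z $ a) = 1"
      using W_unimodular a Z by (simp add: WZ unimodular_vec_def norm_mult)
    then have "(cmod c)\<^sup>2 * (cmod (Z $ a))\<^sup>2 = 1"
      by (metis power_mult_distrib power_one)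
    then show ?thesis
      by (auto simp: eq_divide_eq mult.commute)
  qed
  then have "mat (Suc n) (Suc n) (\<lambda>(a,b). if a = b then complex_of_real ((cmod (Z $ a))\<^sup>2) else 0)
      = ?k \<cdot>\<^sub>m 1\<^sub>m (Suc n)"
    by (intro eq_matI) auto
  moreover have "H * (?k \<cdot>\<^sub>m 1\<^sub>m (Suc n)) * mat_adjoint H = ?k \<cdot>\<^sub>m (H * mat_adjoint H)"
    using H_carrier by (simp add: mult_smult_distrib[OF H_carrier one_carrier_mat]
        mult_smult_assoc_mat[OF H_carrier mat_adjoint_carrier[OF H_carrier]])
  ultimately show ?thesis
    by (simp add: partial_hadamard_mult_adjoint[OF H]) (auto intro!: eq_matI)
qed

end

lemma is_projection_const_mat: "is_projection n (mat n n (\<lambda>_. complex_of_real (1 / real n)))"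
  unfolding is_projection_def
  by (auto simp: scalar_prod_def index_mat_adjoint[OF mat_carrier] intro!: eq_matI)

lemma exists_smult_cscalar_self:
  assumes Z: "Z \<in> carrier_vec d" "Z \<noteq> 0\<^sub>v d" and r: "r > 0"
  shows "\<exists>c. (c \<cdot>\<^sub>v Z) \<bullet>c (c \<cdot>\<^sub>v Z) = complex_of_real r"
proof -
  define s where "s = (\<Sum>l<d. (cmod (Z $ l))\<^sup>2)"
  have "complex_of_real s \<noteq> 0"
    using Z conjugate_square_eq_0_vec[OF Z(1)] cscalar_self_eq_of_real[of Z] by (simp add: s_def)
  moreover have "s \<ge> 0"
    unfolding s_def by (intro sum_nonneg) simp
  ultimately have s: "s > 0" by simp
  define c where "c = complex_of_real (sqrt (r / s))"
  have "(c \<cdot>\<^sub>v Z) \<bullet>c (c \<cdot>\<^sub>v Z) = complex_of_real (\<Sum>l<d. r / s * (cmod (Z $ l))\<^sup>2)"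
    using Z r s by (simp add: cscalar_self_eq_of_real c_def norm_mult power_mult_distrib)
  also have "(\<Sum>l<d. r / s * (cmod (Z $ l))\<^sup>2) = r"
    using s unfolding sum_distrib_left[symmetric] s_def[symmetric] by simp
  finally show ?thesis by blast
qed

theorem proposition3p7:
  fixes N :: nat and H :: "complex mat" and Z :: "complex vec"
  assumes "N \<ge> 2"
    and "partial_hadamard (N - 1) N H"
    and "Z \<in> carrier_vec N" and "Z \<noteq> 0\<^sub>v N"
    and "\<forall>v \<in> carrier_vec N.
           (\<forall>i<N-1. v \<bullet>c row H i = 0) \<longleftrightarrow> (\<exists>a::complex. v = a \<cdot>\<^sub>v Z)"
  defines "P \<equiv> (\<lambda>i j. Proj (vec_div (row H i) (row H j)))"
    and "G \<equiv> mat N N (\<lambda>(k,l). complex_of_real ((cmod (col H k \<bullet>c col H l))\<^sup>2 / real N))"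
    and "D \<equiv> mat N N (\<lambda>(a,b). if a = b then complex_of_real ((cmod (Z $ a))\<^sup>2) else 0)"
  shows "(has_magic_completion N N P
            \<longleftrightarrow> is_projection N (G - of_nat (N - 2) \<cdot>\<^sub>m 1\<^sub>m N))
       \<and> (is_projection N (G - of_nat (N - 2) \<cdot>\<^sub>m 1\<^sub>m N)
            \<longleftrightarrow> (\<exists>c::complex. H * D * mat_adjoint H = c \<cdot>\<^sub>m 1\<^sub>m (N - 1)))"
proof -
  obtain n where N: "N = Suc n"
    using assms(1) by (cases N) auto
  have n: "1 \<le> n"
    using assms(1) N by simp
  obtain c where norm: "(c \<cdot>\<^sub>v Z) \<bullet>c (c \<cdot>\<^sub>v Z) = of_nat (Suc n)"
    using exists_smult_cscalar_self[OF assms(3,4), of "real N"] N by auto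
  have "\<forall>i<n. (c \<cdot>\<^sub>v Z) \<bullet>c row H i = 0"
    using assms(5) assms(3) N by auto
  then interpret hadamard_row_completion n H "c \<cdot>\<^sub>v Z"
    using assms(2,3) norm N by unfold_locales simp_all
  have "has_magic_completion N N P"
    using has_magic_completion_Proj_vec_div by (simp add: N P_def)
  moreover have "is_projection N (G - of_nat (N - 2) \<cdot>\<^sub>m 1\<^sub>m N)"
    using col_Gram_minus_smult_one[OF n] is_projection_const_mat[of N] by (simp add: G_def N)
  moreover have "\<exists>c::complex. H * D * mat_adjoint H = c \<cdot>\<^sub>m 1\<^sub>m (N - 1)"
    using mult_diag_norm_mult_adjoint[OF _ refl] assms(3) by (auto simp: D_def N)
  ultimately show ?thesis by blast
qed

end
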